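(* Let $r=r(n)\ge5$ be an integer-valued function with $r=o(n^{1/8})$. Then there is a function $\varepsilon(n)\to0$ such that for every $n$, every independent set $A$ of $G(n,r,1)$ and every choice of $A_0$ as in the context, $$\sum_{i\ge2}|A_i|\le\varepsilon(n)\binom{n-2}{r-2}.$$
   Context: $G(n,r,1)$ is the graph on $[n]^{(r)}$ in which two $r$-subsets are adjacent iff they intersect in exactly one element. Given an independent set $A$, let $A_0=\{v_1,\dots,v_k\}\subset A$ be a subfamily of pairwise disjoint sets of maximum possible cardinality, and for $i\ge1$ let $A_i$ be the set of $v\in A\setminus A_0$ that intersect exactly $i$ of the sets $v_1,\dots,v_k$. *)

theory Defs
  imports Complex_Main "HOL-Library.Landau_Symbols"
begin

definition rsubsets :: "nat \<Rightarrow> nat \<Rightarrow> nat set set" where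
  "rsubsets n r = {S. S \<subseteq> {1..n} \<and> card S = r}"

definition adj_Gnr1 :: "nat set \<Rightarrow> nat set \<Rightarrow> bool" where
  "adj_Gnr1 S T \<longleftrightarrow> S \<noteq> T \<and> card (S \<inter> T) = 1"

definition indep_Gnr1 :: "nat \<Rightarrow> nat \<Rightarrow> nat set set \<Rightarrow> bool" where
  "indep_Gnr1 n r A \<longleftrightarrow> A \<subseteq> rsubsets n r \<and> (\<forall>S\<in>A. \<forall>T\<in>A. \<not> adj_Gnr1 S T)"

definition max_disjoint_subfamily :: "nat set set \<Rightarrow> nat set set \<Rightarrow> bool" where
  "max_disjoint_subfamily A A0 \<longleftrightarrow>
     A0 \<subseteq> A \<and> pairwise disjnt A0 \<and>
     (\<forall>B. B \<subseteq> A \<and> pairwise disjnt B \<longrightarrow> card B \<le> card A0)"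

definition A_layer :: "nat set set \<Rightarrow> nat set set \<Rightarrow> nat \<Rightarrow> nat set set" where
  "A_layer A A0 i = {v \<in> A - A0. card {u \<in> A0. u \<inter> v \<noteq> {}} = i}"

end

theory Submission
  imports Defs "HOL-Real_Asymp.Real_Asymp"
begin

text \<open>
  Let \<open>U = \<Union>A0\<close>. By independence a member \<open>v \<notin> A0\<close> of \<open>A\<close> meets each
  \<open>u \<in> A0\<close> in no point or in at least two. Hence if \<open>v\<close> meets at least two members
  of \<open>A0\<close>, then either \<open>v\<close> contains six points forming pairs inside three distinct
  members of \<open>A0\<close>, or five points forming a triple and a pair inside two of them, or
  \<open>v \<inter> U\<close> is a union of two such pairs. Since \<open>|A0| r \<le> n\<close> there are at most
  \<open>n r\<close> such pairs and \<open>n r^2\<close> such triples, and at most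
  \<open>(r/n)^(j-2) C(n-2, r-2)\<close> \<open>r\<close>-sets contain a fixed \<open>j\<close>-set;
  this handles the first two cases.

  In the third case split \<open>v\<close> into its head \<open>v \<inter> U\<close> and its tail \<open>v - U\<close>.
  Two members with disjoint heads meet exactly in the intersection of their tails, so
  that intersection is not a singleton. Consequently a tail with many heads meets no tail
  in exactly one point, and all such heavy tails through a point \<open>x\<close> share a second
  point with one fixed heavy tail. Counting light and heavy tails separately bounds the
  third case, and the total is at most \<open>11 r^7/n C(n-2, r-2)\<close>, where
  \<open>r^7/n \<longrightarrow> 0\<close> because \<open>r = o(n^(1/8))\<close>.
\<close>

section \<open>Counting \<open>r\<close>-sets through a fixed set\<close>

lemma binomial_diff_le_ratio_power:
  assumes "i \<le> r" "r \<le> n"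
  shows "real ((n - i) choose (r - i)) \<le> (real r / real n) ^ i * real (n choose r)"
  using assms(1)
proof (induction i)
  case 0
  show ?case by simp
next
  case (Suc i)
  define a where "a = n - Suc i"
  define b where "b = r - Suc i"
  have ab: "n - i = Suc a" "r - i = Suc b"
    using Suc.prems assms(2) by (auto simp: a_def b_def)
  have "Suc b * (Suc a choose Suc b) = Suc a * (a choose b)"
    by (rule binomial_absorption[of b "Suc a", unfolded diff_Suc_1])
  then have "real (a choose b) = real (Suc b) / real (Suc a) * real (Suc a choose Suc b)"
    by (simp del: binomial_Suc_Suc of_nat_Suc add: field_simps flip: of_nat_mult)
  also have "\<dots> \<le> real r / real n * real (Suc a choose Suc b)"
  proof (rule mult_right_mono)
    have "real (r - i) * real n \<le> real r * real (n - i)"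
      using Suc.prems assms(2) by (simp add: of_nat_diff algebra_simps mult_left_mono)
    then show "real (Suc b) / real (Suc a) \<le> real r / real n"
      using ab Suc.prems assms(2) by (simp add: divide_simps)
  qed simp
  also have "\<dots> \<le> real r / real n * ((real r / real n) ^ i * real (n choose r))"
    using Suc ab by (intro mult_left_mono) simp_all
  finally show ?case
    by (simp add: a_def b_def)
qed

lemma card_rsubsets_supset:
  assumes "T \<subseteq> {1..n}" "card T \<le> r"
  shows "card {v \<in> rsubsets n r. T \<subseteq> v} = (n - card T) choose (r - card T)"
proof -
  have fin: "finite T" "finite ({1..n} - T)"
    using assms(1) finite_subset by auto
  have "{v \<in> rsubsets n r. T \<subseteq> v} = (\<lambda>S. S \<union> T) ` {S. S \<subseteq> {1..n} - T \<and> card S = r - card T}"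
  proof (intro equalityI subsetI)
    fix v assume "v \<in> {v \<in> rsubsets n r. T \<subseteq> v}"
    then have "v = (v - T) \<union> T" "v - T \<in> {S. S \<subseteq> {1..n} - T \<and> card S = r - card T}"
      using fin by (auto simp: rsubsets_def card_Diff_subset)
    then show "v \<in> (\<lambda>S. S \<union> T) ` {S. S \<subseteq> {1..n} - T \<and> card S = r - card T}"
      by blast
  next
    fix v assume "v \<in> (\<lambda>S. S \<union> T) ` {S. S \<subseteq> {1..n} - T \<and> card S = r - card T}"
    then obtain S where "S \<subseteq> {1..n} - T" "card S = r - card T" "v = S \<union> T"
      by blast
    moreover have "card (S \<union> T) = card S + card T"
      using \<open>S \<subseteq> {1..n} - T\<close> fin by (intro card_Un_disjoint) (auto intro: finite_subset)
    ultimately show "v \<in> {v \<in> rsubsets n r. T \<subseteq> v}"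
      using assms by (auto simp: rsubsets_def)
  qed
  moreover have "inj_on (\<lambda>S. S \<union> T) {S. S \<subseteq> {1..n} - T \<and> card S = r - card T}"
    by (rule inj_onI) blast
  ultimately have "card {v \<in> rsubsets n r. T \<subseteq> v} = card {S. S \<subseteq> {1..n} - T \<and> card S = r - card T}"
    by (simp add: card_image)
  also have "\<dots> = (n - card T) choose (r - card T)"
    using assms fin by (simp add: n_subsets card_Diff_subset)
  finally show ?thesis .
qed

lemma card_rsubsets_supset_le:
  assumes "T \<subseteq> {1..n}" "2 \<le> card T"
  shows "real (card {v \<in> rsubsets n r. T \<subseteq> v})
           \<le> (real r / real n) ^ (card T - 2) * real ((n - 2) choose (r - 2))"
proof (cases "card T \<le> r \<and> r \<le> n")
  case True
  have le: "card T - 2 \<le> r - 2" "r - 2 \<le> n - 2"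
    and eq: "n - 2 - (card T - 2) = n - card T" "r - 2 - (card T - 2) = r - card T"
    using True assms(2) by auto
  have ratio: "real (r - 2) / real (n - 2) \<le> real r / real n"
  proof (cases "r < 2 \<or> n \<le> 2")
    case False
    then show ?thesis
      using True by (simp add: divide_simps of_nat_diff algebra_simps)
  qed auto
  have "real (card {v \<in> rsubsets n r. T \<subseteq> v}) = real ((n - card T) choose (r - card T))"
    using True assms(1) by (simp add: card_rsubsets_supset)
  also have "\<dots> \<le> (real (r - 2) / real (n - 2)) ^ (card T - 2) * real ((n - 2) choose (r - 2))"
    using binomial_diff_le_ratio_power[OF le] unfolding eq .
  also have "\<dots> \<le> (real r / real n) ^ (card T - 2) * real ((n - 2) choose (r - 2))"
    using ratio by (intro mult_right_mono power_mono) auto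
  finally show ?thesis .
next
  case False
  have "{v \<in> rsubsets n r. T \<subseteq> v} = {}"
  proof (rule ccontr)
    assume "{v \<in> rsubsets n r. T \<subseteq> v} \<noteq> {}"
    then obtain v where v: "v \<subseteq> {1..n}" "card v = r" "T \<subseteq> v"
      by (auto simp: rsubsets_def)
    then have "card T \<le> r" "r \<le> n"
      using card_mono[OF finite_subset[OF v(1)] v(3)] card_mono[of "{1..n}" v] by auto
    with False show False by simp
  qed
  then show ?thesis
    by (simp only: card.empty of_nat_0) simp
qed

lemma real_card_UN_le:
  assumes "finite I" "\<And>i. i \<in> I \<Longrightarrow> real (card (F i)) \<le> c"
  shows "real (card (\<Union>i\<in>I. F i)) \<le> real (card I) * c"
proof -
  have "real (card (\<Union>i\<in>I. F i)) \<le> (\<Sum>i\<in>I. real (card (F i)))"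
    using card_UN_le[OF assms(1)] by (metis of_nat_le_iff of_nat_sum)
  also have "\<dots> \<le> real (card I) * c"
    using assms(2) by (rule sum_bounded_above)
  finally show ?thesis .
qed

lemma card_rsubsets_supset_any_le:
  assumes "finite I" "\<And>T. T \<in> I \<Longrightarrow> T \<subseteq> {1..n} \<and> card T = j" "2 \<le> j"
  shows "real (card {v \<in> rsubsets n r. \<exists>T\<in>I. T \<subseteq> v})
           \<le> real (card I) * ((real r / real n) ^ (j - 2) * real ((n - 2) choose (r - 2)))"
proof -
  have "{v \<in> rsubsets n r. \<exists>T\<in>I. T \<subseteq> v} = (\<Union>T\<in>I. {v \<in> rsubsets n r. T \<subseteq> v})"
    by auto
  moreover have "real (card (\<Union>T\<in>I. {v \<in> rsubsets n r. T \<subseteq> v}))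
      \<le> real (card I) * ((real r / real n) ^ (j - 2) * real ((n - 2) choose (r - 2)))"
    using assms card_rsubsets_supset_le by (intro real_card_UN_le) force+
  ultimately show ?thesis
    by simp
qed

lemma card_subsets_of_members_le:
  assumes "finite F" "\<And>u. u \<in> F \<Longrightarrow> finite u \<and> card u = r"
  shows "card {p. \<exists>u\<in>F. p \<subseteq> u \<and> card p = j} \<le> card F * r ^ j"
proof -
  have "{p. \<exists>u\<in>F. p \<subseteq> u \<and> card p = j} = (\<Union>u\<in>F. {p. p \<subseteq> u \<and> card p = j})"
    by auto
  then have "card {p. \<exists>u\<in>F. p \<subseteq> u \<and> card p = j} \<le> (\<Sum>u\<in>F. card {p. p \<subseteq> u \<and> card p = j})"
    using card_UN_le[OF assms(1)] by (simp only:)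
  also have "\<dots> = (\<Sum>u\<in>F. r choose j)"
    using assms(2) by (simp add: n_subsets)
  also have "\<dots> \<le> (\<Sum>u\<in>F. r ^ j)"
    by (intro sum_mono) (cases "j \<le> r"; simp add: binomial_le_pow binomial_eq_0)
  finally show ?thesis
    by simp
qed

lemma finite_rsubsets: "finite (rsubsets n r)"
  unfolding rsubsets_def by (rule finite_subset[of _ "Pow {1..n}"]) auto

section \<open>Members of \<open>A\<close> meeting several members of \<open>A0\<close>\<close>

locale indep_max_disjoint =
  fixes n r :: nat and A A0 :: "nat set set"
  assumes indep: "indep_Gnr1 n r A"
    and max_disjoint: "max_disjoint_subfamily A A0"
    and r_ge_5: "5 \<le> r"
begin

abbreviation N :: real where
  "N \<equiv> real ((n - 2) choose (r - 2))"

lemma A_subset: "A \<subseteq> rsubsets n r"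
  using indep by (simp add: indep_Gnr1_def)

lemma finite_A: "finite A"
  using A_subset finite_rsubsets by (rule finite_subset)

lemma A0_subset: "A0 \<subseteq> A"
  using max_disjoint by (simp add: max_disjoint_subfamily_def)

lemma finite_A0: "finite A0"
  using A0_subset finite_A by (rule finite_subset)

lemma A_memberD: "v \<in> A \<Longrightarrow> v \<subseteq> {1..n} \<and> finite v \<and> card v = r"
  using A_subset by (auto simp: rsubsets_def intro: finite_subset)

lemma card_Int_ne_1: "v \<in> A \<Longrightarrow> w \<in> A \<Longrightarrow> v \<noteq> w \<Longrightarrow> card (v \<inter> w) \<noteq> 1"
  using indep by (auto simp: indep_Gnr1_def adj_Gnr1_def)

lemma A0_disjoint: "u \<in> A0 \<Longrightarrow> u' \<in> A0 \<Longrightarrow> u \<noteq> u' \<Longrightarrow> u \<inter> u' = {}"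
  using max_disjoint by (auto simp: max_disjoint_subfamily_def pairwise_def disjnt_def)

lemma card_Int_A0_ge_2:
  assumes "v \<in> A - A0" "u \<in> A0" "u \<inter> v \<noteq> {}"
  shows "2 \<le> card (v \<inter> u)"
proof -
  have "card (v \<inter> u) \<noteq> 1"
    using assms A0_subset by (intro card_Int_ne_1) auto
  moreover have "card (v \<inter> u) \<noteq> 0"
    using assms A_memberD by (auto simp: Int_commute)
  ultimately show ?thesis
    by linarith
qed

definition U :: "nat set" where
  "U = \<Union>A0"

lemma U_subset: "U \<subseteq> {1..n}"
  using A0_subset A_memberD by (auto simp: U_def)

lemma finite_U: "finite U"
  using U_subset finite_subset by blast

lemma card_A0_mult_le: "card A0 * r \<le> n"
proof -
  have "card U = (\<Sum>u\<in>A0. card u)"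
    unfolding U_def using finite_A0 A0_subset A_memberD A0_disjoint
    by (intro card_Union_disjoint) (auto simp: pairwise_def disjnt_def)
  also have "\<dots> = (\<Sum>u\<in>A0. r)"
    using A0_subset A_memberD by (intro sum.cong) auto
  finally show ?thesis
    using card_mono[OF _ U_subset] by simp
qed

definition pairs :: "nat set set" where
  "pairs = {p. \<exists>u\<in>A0. p \<subseteq> u \<and> card p = 2}"

definition triples :: "nat set set" where
  "triples = {p. \<exists>u\<in>A0. p \<subseteq> u \<and> card p = 3}"

lemma pairs_memberD: "p \<in> pairs \<Longrightarrow> p \<subseteq> U \<and> card p = 2"
  by (auto simp: pairs_def U_def)

lemma triples_memberD: "p \<in> triples \<Longrightarrow> p \<subseteq> U \<and> card p = 3"
  by (auto simp: triples_def U_def)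

lemma finite_pairs: "finite pairs"
  by (rule finite_subset[of _ "Pow U"]) (use pairs_memberD finite_U in auto)

lemma finite_triples: "finite triples"
  by (rule finite_subset[of _ "Pow U"]) (use triples_memberD finite_U in auto)

lemma card_pairs_le: "card pairs \<le> n * r"
proof -
  have "card pairs \<le> card A0 * r ^ 2"
    unfolding pairs_def using finite_A0 A0_subset A_memberD
    by (intro card_subsets_of_members_le) auto
  also have "\<dots> = (card A0 * r) * r"
    by (simp add: power2_eq_square)
  also have "\<dots> \<le> n * r"
    using card_A0_mult_le by simp
  finally show ?thesis .
qed

lemma card_triples_le: "card triples \<le> n * r ^ 2"
proof -
  have "card triples \<le> card A0 * r ^ 3"
    unfolding triples_def using finite_A0 A0_subset A_memberD
    by (intro card_subsets_of_members_le) auto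
  also have "\<dots> = (card A0 * r) * r ^ 2"
    by (simp add: power_eq_if)
  also have "\<dots> \<le> n * r ^ 2"
    using card_A0_mult_le by simp
  finally show ?thesis .
qed

lemma card_pairs_containing_le: "card {p \<in> pairs. y \<in> p} \<le> r"
proof (cases "y \<in> U")
  case True
  then obtain u where u: "u \<in> A0" "y \<in> u"
    by (auto simp: U_def)
  have "{p \<in> pairs. y \<in> p} \<subseteq> (\<lambda>z. {y, z}) ` u"
  proof
    fix p assume "p \<in> {p \<in> pairs. y \<in> p}"
    then obtain u' where "u' \<in> A0" "p \<subseteq> u'" "card p = 2" "y \<in> p"
      by (auto simp: pairs_def)
    moreover have "u' = u"
      using A0_disjoint u \<open>u' \<in> A0\<close> \<open>p \<subseteq> u'\<close> \<open>y \<in> p\<close> by blast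
    ultimately show "p \<in> (\<lambda>z. {y, z}) ` u"
      by (auto simp: card_2_iff doubleton_eq_iff)
  qed
  then have "card {p \<in> pairs. y \<in> p} \<le> card u"
    using u A_memberD A0_subset by (intro surj_card_le) auto
  then show ?thesis
    using u A_memberD A0_subset by auto
next
  case False
  then have "{p \<in> pairs. y \<in> p} = {}"
    using pairs_memberD by blast
  then show ?thesis
    by (simp only: card.empty)
qed

definition six_sets :: "nat set set" where
  "six_sets = {t \<in> (\<lambda>(p, q, s). p \<union> q \<union> s) ` (pairs \<times> pairs \<times> pairs). card t = 6}"

definition five_sets :: "nat set set" where
  "five_sets = {t \<in> (\<lambda>(s, p). s \<union> p) ` (triples \<times> pairs). card t = 5}"

definition quads :: "nat set set" where
  "quads = {t \<in> (\<lambda>(p, q). p \<union> q) ` (pairs \<times> pairs). card t = 4}"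

lemma six_sets_memberD: "t \<in> six_sets \<Longrightarrow> t \<subseteq> U \<and> card t = 6"
  using pairs_memberD by (auto simp: six_sets_def)

lemma five_sets_memberD: "t \<in> five_sets \<Longrightarrow> t \<subseteq> U \<and> card t = 5"
  using pairs_memberD triples_memberD by (auto simp: five_sets_def)

lemma quads_memberD: "t \<in> quads \<Longrightarrow> t \<subseteq> U \<and> card t = 4"
  using pairs_memberD by (auto simp: quads_def)

lemma finite_quads: "finite quads"
  by (simp add: quads_def finite_pairs)

lemma card_six_sets_le: "card six_sets \<le> card pairs ^ 3"
proof -
  have "card six_sets \<le> card (pairs \<times> pairs \<times> pairs)"
    unfolding six_sets_def using finite_pairs
    by (intro surj_card_le[where f = "\<lambda>(p, q, s). p \<union> q \<union> s"]) auto
  then show ?thesis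
    by (simp add: card_cartesian_product power3_eq_cube)
qed

lemma card_five_sets_le: "card five_sets \<le> card triples * card pairs"
proof -
  have "card five_sets \<le> card (triples \<times> pairs)"
    unfolding five_sets_def using finite_pairs finite_triples
    by (intro surj_card_le[where f = "\<lambda>(s, p). s \<union> p"]) auto
  then show ?thesis
    by (simp add: card_cartesian_product)
qed

lemma card_quads_le: "card quads \<le> card pairs ^ 2"
proof -
  have "card quads \<le> card (pairs \<times> pairs)"
    unfolding quads_def using finite_pairs
    by (intro surj_card_le[where f = "\<lambda>(p, q). p \<union> q"]) auto
  then show ?thesis
    by (simp add: card_cartesian_product power2_eq_square)
qed

lemma card_through_six_sets_le:
  "real (card {v \<in> rsubsets n r. \<exists>t\<in>six_sets. t \<subseteq> v}) \<le> real r ^ 7 / real n * N"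
proof -
  have "real (card {v \<in> rsubsets n r. \<exists>t\<in>six_sets. t \<subseteq> v})
      \<le> real (card six_sets) * ((real r / real n) ^ (6 - 2) * N)"
    using six_sets_memberD U_subset finite_pairs
    by (intro card_rsubsets_supset_any_le) (auto simp: six_sets_def)
  also have "\<dots> \<le> (real n * real r) ^ 3 * ((real r / real n) ^ 4 * N)"
  proof -
    have "card six_sets \<le> (n * r) ^ 3"
      using order_trans[OF card_six_sets_le power_mono[OF card_pairs_le]] by simp
    then have "real (card six_sets) \<le> (real n * real r) ^ 3"
      using of_nat_mono by fastforce
    then show ?thesis
      by (simp add: mult_right_mono)
  qed
  also have "\<dots> = real r ^ 7 / real n * N"
    by (cases "n = 0") (simp_all add: field_simps power_divide power_mult_distrib eval_nat_numeral)
  finally show ?thesis .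
qed

lemma card_through_five_sets_le:
  "real (card {v \<in> rsubsets n r. \<exists>t\<in>five_sets. t \<subseteq> v}) \<le> real r ^ 6 / real n * N"
proof -
  have "real (card {v \<in> rsubsets n r. \<exists>t\<in>five_sets. t \<subseteq> v})
      \<le> real (card five_sets) * ((real r / real n) ^ (5 - 2) * N)"
    using five_sets_memberD U_subset finite_pairs finite_triples
    by (intro card_rsubsets_supset_any_le) (auto simp: five_sets_def)
  also have "\<dots> \<le> (real n * real r ^ 2) * (real n * real r) * ((real r / real n) ^ 3 * N)"
  proof -
    have "card five_sets \<le> (n * r ^ 2) * (n * r)"
      using order_trans[OF card_five_sets_le mult_le_mono[OF card_triples_le card_pairs_le]] .
    then have "real (card five_sets) \<le> (real n * real r ^ 2) * (real n * real r)"
      using of_nat_mono by fastforce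
    then show ?thesis
      by (simp add: mult_right_mono)
  qed
  also have "\<dots> = real r ^ 6 / real n * N"
    by (cases "n = 0") (simp_all add: field_simps power_divide power_mult_distrib eval_nat_numeral)
  finally show ?thesis .
qed

definition meets_two :: "nat set set" where
  "meets_two = {v \<in> A - A0. 2 \<le> card {u \<in> A0. u \<inter> v \<noteq> {}}}"

definition quad_members :: "nat set set" where
  "quad_members = {v \<in> A. v \<inter> U \<in> quads}"

lemma sum_card_layers_le: "(\<Sum>i\<in>{2..card A0}. card (A_layer A A0 i)) \<le> card meets_two"
proof -
  have "(\<Sum>i\<in>{2..card A0}. card (A_layer A A0 i)) = card (\<Union>i\<in>{2..card A0}. A_layer A A0 i)"
    using finite_A by (intro card_UN_disjoint[symmetric]) (auto simp: A_layer_def)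
  also have "\<dots> \<le> card meets_two"
    using finite_A by (intro card_mono) (auto simp: meets_two_def A_layer_def)
  finally show ?thesis .
qed

lemma obtain_pair_in_Int:
  assumes "v \<in> A - A0" "u \<in> A0" "u \<inter> v \<noteq> {}"
  obtains p where "p \<in> pairs" "p \<subseteq> v \<inter> u"
proof -
  obtain p where "p \<subseteq> v \<inter> u" "card p = 2"
    using card_Int_A0_ge_2[OF assms] by (rule obtain_subset_with_card_n)
  then show ?thesis
    using assms(2) that by (auto simp: pairs_def)
qed

lemma six_set_below_if_meets_three:
  assumes "v \<in> A - A0" "3 \<le> card {u \<in> A0. u \<inter> v \<noteq> {}}"
  shows "\<exists>t\<in>six_sets. t \<subseteq> v"
proof -
  obtain M where M: "M \<subseteq> {u \<in> A0. u \<inter> v \<noteq> {}}" "card M = 3"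
    using assms(2) by (rule obtain_subset_with_card_n)
  then obtain u1 u2 u3 where "M = {u1, u2, u3}" "u1 \<noteq> u2" "u2 \<noteq> u3" "u1 \<noteq> u3"
    unfolding card_3_iff by blast
  with M have u: "u1 \<in> A0" "u2 \<in> A0" "u3 \<in> A0"
    "u1 \<inter> v \<noteq> {}" "u2 \<inter> v \<noteq> {}" "u3 \<inter> v \<noteq> {}"
    by blast+
  have disj: "u1 \<inter> u2 = {}" "u2 \<inter> u3 = {}" "u1 \<inter> u3 = {}"
    using A0_disjoint u(1-3) \<open>u1 \<noteq> u2\<close> \<open>u2 \<noteq> u3\<close> \<open>u1 \<noteq> u3\<close> by auto
  obtain p1 where p1: "p1 \<in> pairs" "p1 \<subseteq> v \<inter> u1"
    using obtain_pair_in_Int[OF assms(1) u(1,4)] .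
  obtain p2 where p2: "p2 \<in> pairs" "p2 \<subseteq> v \<inter> u2"
    using obtain_pair_in_Int[OF assms(1) u(2,5)] .
  obtain p3 where p3: "p3 \<in> pairs" "p3 \<subseteq> v \<inter> u3"
    using obtain_pair_in_Int[OF assms(1) u(3,6)] .
  have card_p: "finite p1" "card p1 = 2" "finite p2" "card p2 = 2" "finite p3" "card p3 = 2"
    using p1 p2 p3 pairs_memberD by (auto intro: card_ge_0_finite)
  have "card (p1 \<union> p2) = 4"
    using card_p p1 p2 disj by (subst card_Un_disjoint) auto
  then have "card (p1 \<union> p2 \<union> p3) = 6"
    using card_p p1 p2 p3 disj by (subst card_Un_disjoint) auto
  moreover have "p1 \<union> p2 \<union> p3 \<in> (\<lambda>(p, q, s). p \<union> q \<union> s) ` (pairs \<times> pairs \<times> pairs)"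
    by (rule rev_image_eqI[of "(p1, p2, p3)"]) (use p1 p2 p3 in auto)
  ultimately have "p1 \<union> p2 \<union> p3 \<in> six_sets"
    by (simp add: six_sets_def)
  moreover have "p1 \<union> p2 \<union> p3 \<subseteq> v"
    using p1 p2 p3 by blast
  ultimately show ?thesis
    by blast
qed

lemma five_set_below_if_meets_triple:
  assumes "v \<in> A - A0" "u \<in> A0" "u' \<in> A0" "u \<noteq> u'" "3 \<le> card (v \<inter> u)" "u' \<inter> v \<noteq> {}"
  shows "\<exists>t\<in>five_sets. t \<subseteq> v"
proof -
  obtain s where s: "s \<subseteq> v \<inter> u" "card s = 3" "finite s"
    using assms(5) by (rule obtain_subset_with_card_n)
  obtain p where p: "p \<in> pairs" "p \<subseteq> v \<inter> u'"
    using obtain_pair_in_Int[OF assms(1,3,6)] .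
  have "finite p" "card p = 2"
    using p pairs_memberD by (auto intro: card_ge_0_finite)
  moreover have "s \<inter> p = {}"
    using s p A0_disjoint[OF assms(2-4)] by blast
  ultimately have "card (s \<union> p) = 5"
    using s by (simp add: card_Un_disjoint)
  moreover have "s \<in> triples"
    using s assms(2) by (auto simp: triples_def)
  then have "s \<union> p \<in> (\<lambda>(s, p). s \<union> p) ` (triples \<times> pairs)"
    using p by (intro rev_image_eqI[of "(s, p)"]) auto
  ultimately have "s \<union> p \<in> five_sets"
    by (simp add: five_sets_def)
  moreover have "s \<union> p \<subseteq> v"
    using s p by blast
  ultimately show ?thesis
    by blast
qed

lemma quad_member_if_meets_two_in_pairs:
  assumes "v \<in> A" "{u \<in> A0. u \<inter> v \<noteq> {}} = {u, u'}" "u \<noteq> u'"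
    and "card (v \<inter> u) = 2" "card (v \<inter> u') = 2"
  shows "v \<in> quad_members"
proof -
  have u: "u \<in> A0" "u' \<in> A0"
    using assms(2) by blast+
  have "v \<inter> U = (v \<inter> u) \<union> (v \<inter> u')"
  proof
    show "v \<inter> U \<subseteq> (v \<inter> u) \<union> (v \<inter> u')"
    proof
      fix x assume "x \<in> v \<inter> U"
      then obtain w where "w \<in> A0" "x \<in> w" "x \<in> v"
        by (auto simp: U_def)
      then have "w \<in> {u, u'}"
        using assms(2) by blast
      then show "x \<in> (v \<inter> u) \<union> (v \<inter> u')"
        using \<open>x \<in> w\<close> \<open>x \<in> v\<close> by blast
    qed
    show "(v \<inter> u) \<union> (v \<inter> u') \<subseteq> v \<inter> U"
      using u by (auto simp: U_def)
  qed
  moreover have "card ((v \<inter> u) \<union> (v \<inter> u')) = 4"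
    using assms(4,5) A0_disjoint[OF u assms(3)]
    by (subst card_Un_disjoint) (auto intro: card_ge_0_finite)
  moreover have "v \<inter> u \<in> pairs" "v \<inter> u' \<in> pairs"
    using u assms(4,5) by (auto simp: pairs_def)
  then have "(v \<inter> u) \<union> (v \<inter> u') \<in> (\<lambda>(p, q). p \<union> q) ` (pairs \<times> pairs)"
    by (intro rev_image_eqI[of "(v \<inter> u, v \<inter> u')"]) auto
  ultimately have "v \<inter> U \<in> quads"
    by (simp add: quads_def)
  then show ?thesis
    using assms(1) by (simp add: quad_members_def)
qed

lemma five_set_below_or_quad_member_if_meets_two:
  assumes v: "v \<in> A - A0" and uu': "{u \<in> A0. u \<inter> v \<noteq> {}} = {u, u'}" "u \<noteq> u'"
  shows "(\<exists>t\<in>five_sets. t \<subseteq> v) \<or> v \<in> quad_members"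
proof -
  have u: "u \<in> A0" "u' \<in> A0" "u \<inter> v \<noteq> {}" "u' \<inter> v \<noteq> {}"
    using uu'(1) by blast+
  have "2 \<le> card (v \<inter> u)" "2 \<le> card (v \<inter> u')"
    using card_Int_A0_ge_2 v u by blast+
  then consider "3 \<le> card (v \<inter> u)" | "3 \<le> card (v \<inter> u')"
    | "card (v \<inter> u) = 2" "card (v \<inter> u') = 2"
    by linarith
  then show ?thesis
  proof cases
    case 1
    then show ?thesis
      using five_set_below_if_meets_triple[OF v u(1,2) uu'(2) _ u(4)] by simp
  next
    case 2
    then show ?thesis
      using five_set_below_if_meets_triple[OF v u(2,1) uu'(2)[symmetric] _ u(3)] by simp
  next
    case 3
    then show ?thesis
      using quad_member_if_meets_two_in_pairs[OF _ uu'] v by simp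
  qed
qed

lemma meets_two_subset:
  "meets_two \<subseteq> {v \<in> rsubsets n r. \<exists>t\<in>six_sets. t \<subseteq> v}
     \<union> {v \<in> rsubsets n r. \<exists>t\<in>five_sets. t \<subseteq> v} \<union> quad_members"
proof
  fix v assume "v \<in> meets_two"
  then have v: "v \<in> A - A0" "2 \<le> card {u \<in> A0. u \<inter> v \<noteq> {}}"
    by (auto simp: meets_two_def)
  then have "v \<in> rsubsets n r"
    using A_subset by blast
  consider "3 \<le> card {u \<in> A0. u \<inter> v \<noteq> {}}" | "card {u \<in> A0. u \<inter> v \<noteq> {}} = 2"
    using v(2) by linarith
  then show "v \<in> {v \<in> rsubsets n r. \<exists>t\<in>six_sets. t \<subseteq> v}
     \<union> {v \<in> rsubsets n r. \<exists>t\<in>five_sets. t \<subseteq> v} \<union> quad_members"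
  proof cases
    case 1
    then show ?thesis
      using six_set_below_if_meets_three[OF v(1)] \<open>v \<in> rsubsets n r\<close> by blast
  next
    case 2
    then obtain u u' where "{u \<in> A0. u \<inter> v \<noteq> {}} = {u, u'}" "u \<noteq> u'"
      unfolding card_2_iff by blast
    from five_set_below_or_quad_member_if_meets_two[OF v(1) this]
    show ?thesis
      using \<open>v \<in> rsubsets n r\<close> by blast
  qed
qed

section \<open>Heads and tails\<close>

definition tails :: "nat set set" where
  "tails = (\<lambda>v. v - U) ` quad_members"

definition heads :: "nat set \<Rightarrow> nat set set" where
  "heads R = {Q \<in> quads. Q \<union> R \<in> A}"

lemma finite_tails: "finite tails"
  by (simp add: tails_def quad_members_def finite_A)

lemma finite_heads: "finite (heads R)"
  by (simp add: heads_def finite_quads)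

lemma tails_memberD:
  assumes "R \<in> tails"
  shows "R \<inter> U = {} \<and> R \<subseteq> {1..n} \<and> finite R \<and> card R = r - 4"
proof -
  obtain v where v: "v \<in> A" "v \<inter> U \<in> quads" "R = v - U"
    using assms by (auto simp: tails_def quad_members_def)
  have "card (v \<inter> U) = 4"
    using quads_memberD v(2) by blast
  moreover have "v \<subseteq> {1..n}" "finite v" "card v = r"
    using A_memberD v(1) by auto
  ultimately show ?thesis
    using v(3) by (auto simp: card_Diff_subset_Int)
qed

lemma head_in_heads: "v \<in> quad_members \<Longrightarrow> v \<inter> U \<in> heads (v - U)"
  by (simp add: quad_members_def heads_def Int_Diff_Un)

lemma heads_nonempty: "R \<in> tails \<Longrightarrow> heads R \<noteq> {}"
  using head_in_heads by (auto simp: tails_def)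

lemma card_quad_members_le_sum_heads: "card quad_members \<le> (\<Sum>R\<in>tails. card (heads R))"
proof -
  have "quad_members \<subseteq> (\<Union>R\<in>tails. (\<lambda>Q. Q \<union> R) ` heads R)"
  proof
    fix v assume v: "v \<in> quad_members"
    then have "v = (v \<inter> U) \<union> (v - U)" "v \<inter> U \<in> heads (v - U)" "v - U \<in> tails"
      by (auto simp: head_in_heads tails_def)
    then show "v \<in> (\<Union>R\<in>tails. (\<lambda>Q. Q \<union> R) ` heads R)"
      by blast
  qed
  then have "card quad_members \<le> card (\<Union>R\<in>tails. (\<lambda>Q. Q \<union> R) ` heads R)"
    by (rule card_mono[rotated]) (simp add: finite_tails finite_heads)
  also have "\<dots> \<le> (\<Sum>R\<in>tails. card ((\<lambda>Q. Q \<union> R) ` heads R))"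
    using finite_tails by (rule card_UN_le)
  also have "\<dots> \<le> (\<Sum>R\<in>tails. card (heads R))"
    by (intro sum_mono card_image_le finite_heads)
  finally show ?thesis .
qed

lemma heads_meet:
  assumes "R \<in> tails" "R' \<in> tails" "Q \<in> heads R" "Q' \<in> heads R'" "card (R \<inter> R') = 1"
  shows "Q \<inter> Q' \<noteq> {}"
proof
  assume disj: "Q \<inter> Q' = {}"
  have Q: "Q \<subseteq> U" "card Q = 4" "Q' \<subseteq> U"
    using assms(3,4) quads_memberD by (auto simp: heads_def)
  have R: "R \<inter> U = {}" "R' \<inter> U = {}"
    using tails_memberD assms(1,2) by auto
  have "(Q \<union> R) \<inter> U = Q" "(Q' \<union> R') \<inter> U = Q'"
    using Q R by blast+
  moreover have "Q \<noteq> Q'"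
    using disj Q(2) by auto
  ultimately have "Q \<union> R \<noteq> Q' \<union> R'"
    by metis
  moreover have "(Q \<union> R) \<inter> (Q' \<union> R') = R \<inter> R'"
    using disj Q R by blast
  moreover have "Q \<union> R \<in> A" "Q' \<union> R' \<in> A"
    using assms(3,4) by (auto simp: heads_def)
  ultimately show False
    using card_Int_ne_1[of "Q \<union> R" "Q' \<union> R'"] assms(5) by simp
qed

lemma card_quads_meeting_le:
  assumes "finite X"
  shows "card {Q \<in> quads. Q \<inter> X \<noteq> {}} \<le> 2 * (card X * r) * card pairs"
proof -
  define P where "P = {p \<in> pairs. p \<inter> X \<noteq> {}}"
  have "P = (\<Union>x\<in>X. {p \<in> pairs. x \<in> p})"
    by (auto simp: P_def)
  then have "card P \<le> (\<Sum>x\<in>X. card {p \<in> pairs. x \<in> p})"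
    using card_UN_le[OF assms] by simp
  also have "\<dots> \<le> (\<Sum>x\<in>X. r)"
    by (intro sum_mono card_pairs_containing_le)
  finally have card_P: "card P \<le> card X * r"
    by simp
  have "{Q \<in> quads. Q \<inter> X \<noteq> {}} \<subseteq> (\<lambda>(p, q). p \<union> q) ` (P \<times> pairs \<union> pairs \<times> P)"
  proof
    fix Q assume "Q \<in> {Q \<in> quads. Q \<inter> X \<noteq> {}}"
    then obtain p q where "Q = p \<union> q" "p \<in> pairs" "q \<in> pairs" "Q \<inter> X \<noteq> {}"
      by (auto simp: quads_def)
    then have "(p, q) \<in> P \<times> pairs \<union> pairs \<times> P"
      by (auto simp: P_def)
    then show "Q \<in> (\<lambda>(p, q). p \<union> q) ` (P \<times> pairs \<union> pairs \<times> P)"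
      by (rule rev_image_eqI) (simp add: \<open>Q = p \<union> q\<close>)
  qed
  then have "card {Q \<in> quads. Q \<inter> X \<noteq> {}} \<le> card (P \<times> pairs \<union> pairs \<times> P)"
    by (rule surj_card_le[rotated]) (simp add: P_def finite_pairs)
  also have "\<dots> \<le> card (P \<times> pairs) + card (pairs \<times> P)"
    by (rule card_Un_le)
  also have "\<dots> = 2 * card P * card pairs"
    by (simp add: card_cartesian_product)
  also have "\<dots> \<le> 2 * (card X * r) * card pairs"
    using card_P by simp
  finally show ?thesis .
qed

lemma card_heads_le_if_single_meet:
  assumes "R \<in> tails" "R' \<in> tails" "card (R \<inter> R') = 1"
  shows "card (heads R) \<le> 8 * r * card pairs"
proof -
  obtain Q' where Q': "Q' \<in> heads R'"
    using heads_nonempty[OF assms(2)] by blast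
  then have "card Q' = 4" "finite Q'"
    using quads_memberD finite_U by (auto simp: heads_def intro: finite_subset)
  have "heads R \<subseteq> {Q \<in> quads. Q \<inter> Q' \<noteq> {}}"
    using heads_meet[OF assms(1,2) _ Q' assms(3)] by (auto simp: heads_def)
  then have "card (heads R) \<le> card {Q \<in> quads. Q \<inter> Q' \<noteq> {}}"
    by (rule card_mono[rotated]) (simp add: finite_quads)
  also have "\<dots> \<le> 2 * (card Q' * r) * card pairs"
    using \<open>finite Q'\<close> by (rule card_quads_meeting_le)
  finally show ?thesis
    using \<open>card Q' = 4\<close> by simp
qed

definition heavy :: "nat set set" where
  "heavy = {R \<in> tails. 8 * r * card pairs < card (heads R)}"

lemma heavy_Int_ne_1: "R \<in> heavy \<Longrightarrow> R' \<in> tails \<Longrightarrow> card (R \<inter> R') \<noteq> 1"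
  using card_heads_le_if_single_meet by (fastforce simp: heavy_def)

lemma card_tails_supset_le:
  assumes "S \<subseteq> {1..n}" "S \<inter> U = {}"
  shows "real (card {R \<in> tails. S \<subseteq> R}) \<le> (real r / real n) ^ (card S + 2) * N"
proof (cases "tails = {}")
  case True
  then show ?thesis
    by simp
next
  case False
  then obtain Q0 where "Q0 \<in> quads"
    by (auto simp: tails_def quad_members_def)
  then have Q0: "Q0 \<subseteq> U" "card Q0 = 4" "finite Q0"
    using quads_memberD finite_U finite_subset by blast+
  have "inj_on (\<lambda>R. R \<union> Q0) {R \<in> tails. S \<subseteq> R}"
  proof (rule inj_onI)
    fix R R' assume "R \<in> {R \<in> tails. S \<subseteq> R}" "R' \<in> {R \<in> tails. S \<subseteq> R}"
      and eq: "R \<union> Q0 = R' \<union> Q0"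
    then have "R = (R \<union> Q0) - U" "R' = (R' \<union> Q0) - U"
      using tails_memberD[of R] tails_memberD[of R'] Q0(1) by auto
    then show "R = R'"
      using eq by simp
  qed
  moreover have "(\<lambda>R. R \<union> Q0) ` {R \<in> tails. S \<subseteq> R} \<subseteq> {v \<in> rsubsets n r. Q0 \<union> S \<subseteq> v}"
  proof (rule image_subsetI)
    fix R assume "R \<in> {R \<in> tails. S \<subseteq> R}"
    then have "R \<in> tails" "S \<subseteq> R"
      by simp_all
    with tails_memberD have R: "R \<inter> U = {}" "R \<subseteq> {1..n}" "finite R" "card R = r - 4"
      by auto
    then have "card (R \<union> Q0) = r"
      using Q0 r_ge_5 by (subst card_Un_disjoint) auto
    then show "R \<union> Q0 \<in> {v \<in> rsubsets n r. Q0 \<union> S \<subseteq> v}"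
      using R Q0 U_subset \<open>S \<subseteq> R\<close> by (auto simp: rsubsets_def)
  qed
  ultimately have "card {R \<in> tails. S \<subseteq> R} \<le> card {v \<in> rsubsets n r. Q0 \<union> S \<subseteq> v}"
    by (intro card_inj_on_le) (simp_all add: finite_rsubsets)
  moreover have "card (Q0 \<union> S) = card S + 4"
    using Q0 assms finite_subset[OF assms(1)] by (subst card_Un_disjoint) auto
  moreover have "real (card {v \<in> rsubsets n r. Q0 \<union> S \<subseteq> v})
      \<le> (real r / real n) ^ (card (Q0 \<union> S) - 2) * N"
    using Q0 U_subset assms \<open>card (Q0 \<union> S) = card S + 4\<close>
    by (intro card_rsubsets_supset_le) auto
  ultimately show ?thesis
    by (simp add: numeral_eq_Suc)
qed

lemma card_tails_le: "real (card tails) \<le> (real r / real n) ^ 2 * N"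
  using card_tails_supset_le[of "{}"] by (simp add: power2_eq_square)

lemma card_heavy_containing_le:
  "real (card {R \<in> heavy. x \<in> R}) \<le> real r * ((real r / real n) ^ 4 * N)"
proof (cases "{R \<in> heavy. x \<in> R} = {}")
  case True
  then show ?thesis
    by (simp only: card.empty) simp
next
  case False
  then obtain R1 where R1: "R1 \<in> heavy" "x \<in> R1"
    by blast
  then have "R1 \<in> tails"
    by (simp add: heavy_def)
  then have R1_props: "R1 \<inter> U = {}" "R1 \<subseteq> {1..n}" "finite R1" "card R1 = r - 4"
    using tails_memberD by auto
  have "{R \<in> heavy. x \<in> R} \<subseteq> (\<Union>y\<in>R1 - {x}. {R \<in> tails. {x, y} \<subseteq> R})"
  proof
    fix R assume R: "R \<in> {R \<in> heavy. x \<in> R}"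
    then have "R \<in> tails"
      by (simp add: heavy_def)
    \<comment> \<open>this also covers \<open>R = R1\<close>: heavy tails are not singletons\<close>
    then have "card (R1 \<inter> R) \<noteq> 1"
      using heavy_Int_ne_1 R1(1) by blast
    then have "R1 \<inter> R \<noteq> {x}"
      by auto
    moreover have "x \<in> R1 \<inter> R"
      using R R1 by blast
    ultimately obtain y where "y \<in> R1 \<inter> R" "y \<noteq> x"
      by blast
    then show "R \<in> (\<Union>y\<in>R1 - {x}. {R \<in> tails. {x, y} \<subseteq> R})"
      using \<open>R \<in> tails\<close> \<open>x \<in> R1 \<inter> R\<close> by blast
  qed
  then have "card {R \<in> heavy. x \<in> R} \<le> card (\<Union>y\<in>R1 - {x}. {R \<in> tails. {x, y} \<subseteq> R})"
    by (rule card_mono[rotated]) (simp add: finite_tails R1_props)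
  also have "real \<dots> \<le> real (card (R1 - {x})) * ((real r / real n) ^ 4 * N)"
  proof (rule real_card_UN_le)
    fix y assume "y \<in> R1 - {x}"
    then have "{x, y} \<subseteq> {1..n}" "{x, y} \<inter> U = {}" "card {x, y} = 2"
      using R1 R1_props by auto
    then show "real (card {R \<in> tails. {x, y} \<subseteq> R}) \<le> (real r / real n) ^ 4 * N"
      using card_tails_supset_le[of "{x, y}"] by simp
  qed (simp add: R1_props)
  also have "\<dots> \<le> real r * ((real r / real n) ^ 4 * N)"
    using R1_props by (intro mult_right_mono) (simp_all add: card_Diff_singleton_if)
  finally show ?thesis
    by simp
qed

lemma card_heavy_le: "real (card heavy) \<le> real n * (real r * ((real r / real n) ^ 4 * N))"
proof -
  have "heavy \<subseteq> (\<Union>x\<in>{1..n}. {R \<in> heavy. x \<in> R})"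
  proof
    fix R assume "R \<in> heavy"
    then have "R \<in> tails"
      by (simp add: heavy_def)
    then have "R \<subseteq> {1..n}" "R \<noteq> {}"
      using tails_memberD r_ge_5 by fastforce+
    then show "R \<in> (\<Union>x\<in>{1..n}. {R \<in> heavy. x \<in> R})"
      using \<open>R \<in> heavy\<close> by blast
  qed
  then have "card heavy \<le> card (\<Union>x\<in>{1..n}. {R \<in> heavy. x \<in> R})"
    by (rule card_mono[rotated]) (simp add: heavy_def finite_tails)
  also have "real \<dots> \<le> real (card {1..n}) * (real r * ((real r / real n) ^ 4 * N))"
    by (intro real_card_UN_le card_heavy_containing_le) simp
  finally show ?thesis
    by simp
qed

lemma card_quad_members_le_light_heavy:
  "card quad_members \<le> card tails * (8 * r * card pairs) + card heavy * card quads"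
proof -
  have heavy_tails: "heavy \<subseteq> tails"
    by (auto simp: heavy_def)
  have "card quad_members \<le> (\<Sum>R\<in>tails. card (heads R))"
    by (rule card_quad_members_le_sum_heads)
  also have "\<dots> = (\<Sum>R\<in>tails - heavy. card (heads R)) + (\<Sum>R\<in>heavy. card (heads R))"
    using heavy_tails finite_tails by (rule sum.subset_diff)
  also have "\<dots> \<le> card tails * (8 * r * card pairs) + card heavy * card quads"
  proof (rule add_mono)
    have "(\<Sum>R\<in>tails - heavy. card (heads R)) \<le> (\<Sum>R\<in>tails - heavy. 8 * r * card pairs)"
      by (rule sum_mono) (auto simp: heavy_def)
    also have "\<dots> \<le> card tails * (8 * r * card pairs)"
      using card_mono[OF finite_tails Diff_subset[of tails heavy]] by simp
    finally show "(\<Sum>R\<in>tails - heavy. card (heads R)) \<le> card tails * (8 * r * card pairs)" .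
    have "(\<Sum>R\<in>heavy. card (heads R)) \<le> (\<Sum>R\<in>heavy. card quads)"
      by (rule sum_mono, rule card_mono) (auto simp: heads_def finite_quads)
    then show "(\<Sum>R\<in>heavy. card (heads R)) \<le> card heavy * card quads"
      by simp
  qed
  finally show ?thesis .
qed

lemma card_quad_members_le:
  "real (card quad_members) \<le> 8 * real r ^ 4 / real n * N + real r ^ 7 / real n * N"
proof -
  have "real (card quad_members)
      \<le> real (card tails * (8 * r * card pairs) + card heavy * card quads)"
    using card_quad_members_le_light_heavy by (rule of_nat_mono)
  also have "\<dots> = real (card tails) * (8 * real r * real (card pairs))
      + real (card heavy) * real (card quads)"
    by simp
  also have "\<dots> \<le> (real r / real n) ^ 2 * N * (8 * real r * (real n * real r))
      + real n * (real r * ((real r / real n) ^ 4 * N)) * (real n * real r) ^ 2"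
  proof (rule add_mono)
    have "real (card pairs) \<le> real n * real r"
      using of_nat_mono[OF card_pairs_le] by simp
    then show "real (card tails) * (8 * real r * real (card pairs))
        \<le> (real r / real n) ^ 2 * N * (8 * real r * (real n * real r))"
      by (intro mult_mono[OF card_tails_le] mult_left_mono) auto
    have "real (card quads) \<le> (real n * real r) ^ 2"
      using of_nat_mono[OF order_trans[OF card_quads_le power_mono[OF card_pairs_le]]] by simp
    then show "real (card heavy) * real (card quads)
        \<le> real n * (real r * ((real r / real n) ^ 4 * N)) * (real n * real r) ^ 2"
      by (intro mult_mono[OF card_heavy_le]) auto
  qed
  also have "\<dots> = 8 * real r ^ 4 / real n * N + real r ^ 7 / real n * N"
    by (cases "n = 0") (simp_all add: field_simps power_divide power_mult_distrib eval_nat_numeral)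
  finally show ?thesis .
qed

lemma sum_card_layers_le_power7:
  "real (\<Sum>i\<in>{2..card A0}. card (A_layer A A0 i)) \<le> 11 * real r ^ 7 / real n * N"
proof -
  let ?S6 = "{v \<in> rsubsets n r. \<exists>t\<in>six_sets. t \<subseteq> v}"
  let ?S5 = "{v \<in> rsubsets n r. \<exists>t\<in>five_sets. t \<subseteq> v}"
  have "(\<Sum>i\<in>{2..card A0}. card (A_layer A A0 i)) \<le> card meets_two"
    by (rule sum_card_layers_le)
  also have "\<dots> \<le> card (?S6 \<union> ?S5 \<union> quad_members)"
    using meets_two_subset by (rule card_mono[rotated]) (simp add: finite_rsubsets quad_members_def finite_A)
  also have "\<dots> \<le> card ?S6 + card ?S5 + card quad_members"
    by (meson card_Un_le add_right_mono order_trans)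
  finally have "real (\<Sum>i\<in>{2..card A0}. card (A_layer A A0 i))
      \<le> real (card ?S6) + real (card ?S5) + real (card quad_members)"
    using of_nat_mono by fastforce
  also have "\<dots> \<le> real r ^ 7 / real n * N + real r ^ 6 / real n * N
      + (8 * real r ^ 4 / real n * N + real r ^ 7 / real n * N)"
    using card_through_six_sets_le card_through_five_sets_le card_quad_members_le
    by (intro add_mono)
  also have "\<dots> \<le> 11 * real r ^ 7 / real n * N"
  proof -
    have "real r ^ k / real n * N \<le> real r ^ 7 / real n * N" if "k \<le> 7" for k
      using r_ge_5 that by (intro mult_right_mono divide_right_mono power_increasing) auto
    from this[of 4] this[of 6] show ?thesis
      by simp
  qed
  finally show ?thesis .
qed

end

lemma smallo_root8_power7_div_tendsto_0:
  fixes f :: "nat \<Rightarrow> real"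
  assumes "f \<in> o(\<lambda>n. real n powr (1/8))"
  shows "(\<lambda>n. f n ^ 7 / real n) \<longlonglongrightarrow> 0"
proof -
  have "(\<lambda>n. f n ^ 7) \<in> o(\<lambda>n. (real n powr (1/8)) ^ 7)"
    by (rule landau_o.small_power[OF assms]) simp
  also have "(\<lambda>n. (real n powr (1/8)) ^ 7) \<in> O(\<lambda>n. real n)"
    by real_asymp
  finally show ?thesis
    by (rule smalloD_tendsto)
qed

theorem lemma4:
  fixes r :: "nat \<Rightarrow> nat"
  assumes r_ge: "\<And>n. r n \<ge> 5"
    and r_small: "(\<lambda>n. real (r n)) \<in> o(\<lambda>n. real n powr (1/8))"
  shows "\<exists>\<epsilon> :: nat \<Rightarrow> real. \<epsilon> \<longlonglongrightarrow> 0 \<and>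
           (\<forall>n A A0. indep_Gnr1 n (r n) A \<and> max_disjoint_subfamily A A0 \<longrightarrow>
              real (\<Sum>i\<in>{2..card A0}. card (A_layer A A0 i))
                \<le> \<epsilon> n * real ((n - 2) choose (r n - 2)))"
proof (intro exI[of _ "\<lambda>n. 11 * real (r n) ^ 7 / real n"] conjI allI impI)
  show "(\<lambda>n. 11 * real (r n) ^ 7 / real n) \<longlonglongrightarrow> 0"
    using tendsto_mult_right_zero[OF smallo_root8_power7_div_tendsto_0[OF r_small], of 11] by simp
next
  fix n A A0
  assume "indep_Gnr1 n (r n) A \<and> max_disjoint_subfamily A A0"
  then interpret indep_max_disjoint n "r n" A A0
    using r_ge by unfold_locales auto
  show "real (\<Sum>i\<in>{2..card A0}. card (A_layer A A0 i))
      \<le> 11 * real (r n) ^ 7 / real n * real ((n - 2) choose (r n - 2))"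
    by (rule sum_card_layers_le_power7)
qed

end
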